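(* Let $B=(b_{st})$ be an $n\times n$ symmetric matrix over the complex numbers. For $1\le i,j\le n$ let $B_{[ij]}$ be the matrix obtained from $B$ by replacing the entries in positions $(i,j)$ and $(j,i)$ by $0$ (all other entries unchanged), and for $i<j$ let $B^{i,j}_{i,j}$ be the submatrix of $B$ obtained by deleting rows $i,j$ and columns $i,j$. Let $2m$ be the number of nonzero off-diagonal entries of $B$ and let $c$ be the number of zero entries on the diagonal of $B$. Then $$(m-c)\,d_2(B)=\sum_{(i,j)\in I_1} d_2(B_{[ij]})+\sum_{(i,j)\in I_2} b_{ij}^2\, d_2(B^{i,j}_{i,j}),$$ where $I_1=\{(i,j): b_{ij}\ne 0,\ 1\le i\le j\le n\}$ and $I_2=\{(i,j): b_{ij}\ne 0,\ 1\le i<j\le n\}$.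
   Context: For an $n\times n$ matrix $M=(m_{ij})$ ($n\ge 2$), the second immanant is $d_2(M)=\sum_{\sigma\in S_n}\chi_2(\sigma)\prod_{s=1}^n m_{s\sigma(s)}$, where $\chi_2$ is the irreducible character of $S_n$ corresponding to the partition $(2,1^{n-2})$. It satisfies $d_2(X)=\sum_{i=1}^k x_{ii}\det(X(i))-\det(X)$ for a $k\times k$ matrix $X$, where $X(i)$ is $X$ with row and column $i$ deleted; for matrices of order less than $2$, $d_2$ is understood via this identity, with the determinant of the empty matrix equal to $1$. *)

theory Defs
  imports "Jordan_Normal_Form.Determinant"
begin

text \<open>The character of S_k for the partition (2,1^(k-2)) is
  chi_2(p) = sign(p) * (number of fixed points of p - 1).
  Second immanant of a square matrix (indices 0..<k).\<close>
definition chi2 :: "nat \<Rightarrow> (nat \<Rightarrow> nat) \<Rightarrow> int" where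
  "chi2 k p = sign p * (int (card {i. i < k \<and> p i = i}) - 1)"

definition d2 :: "complex mat \<Rightarrow> complex" where
  "d2 M = (\<Sum> p \<in> {p. p permutes {0 ..< dim_row M}}.
     of_int (chi2 (dim_row M) p) * (\<Prod> i = 0 ..< dim_row M. M $$ (i, p i)))"

definition zero_pair :: "complex mat \<Rightarrow> nat \<Rightarrow> nat \<Rightarrow> complex mat" where
  "zero_pair B i j = mat (dim_row B) (dim_col B)
     (\<lambda>(s,t). if (s = i \<and> t = j) \<or> (s = j \<and> t = i) then 0 else B $$ (s,t))"

definition del2 :: "complex mat \<Rightarrow> nat \<Rightarrow> nat \<Rightarrow> complex mat" where
  "del2 B i j = mat_delete (mat_delete B j j) i i"

end

theory Submission
  imports Defs
begin

(* Expand every immanant as a sum over permutations p of chi2 p times the diagonal product of B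
   along p.  The term of p survives in d2 (zero_pair B i j) exactly when {i, j} is not an edge
   {s, p s} of p.  If the product along p is nonzero, all n - t(p) edges of p (t(p) the number of
   2-cycles) are among the m + n - c nonzero entries on or above the diagonal, so the first sum
   on the right counts p exactly m - c + t(p) times.  The excess t(p) is cancelled by the second sum: after
   moving j, k to the last two positions, a permutation swapping j and k is a transposition times
   a permutation of the other n - 2 indices, which flips the sign and keeps the fixed points, so
   these permutations contribute -b_jk^2 d2 (del2 B j k). *)

definition d2_term :: "complex mat \<Rightarrow> nat \<Rightarrow> (nat \<Rightarrow> nat) \<Rightarrow> complex" where
  "d2_term B n p = of_int (chi2 n p) * (\<Prod>i = 0..<n. B $$ (i, p i))"

lemma d2_eq_sum_d2_term:
  "B \<in> carrier_mat n n \<Longrightarrow> d2 B = (\<Sum>p | p permutes {0..<n}. d2_term B n p)"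
  by (simp add: d2_def d2_term_def)

lemma card_fixpoints_conj:
  assumes "g permutes S"
  shows "card {a \<in> S. (g \<circ> r \<circ> Hilbert_Choice.inv g) a = a} = card {b \<in> S. r b = b}"
proof -
  have "{a \<in> S. (g \<circ> r \<circ> Hilbert_Choice.inv g) a = a} = g ` {b \<in> S. r b = b}"
  proof (intro equalityI subsetI)
    fix a assume "a \<in> {a \<in> S. (g \<circ> r \<circ> Hilbert_Choice.inv g) a = a}"
    then have a: "a \<in> S" "g (r (Hilbert_Choice.inv g a)) = a"
      by auto
    define b where "b = Hilbert_Choice.inv g a"
    have "b \<in> S"
      using a(1) permutes_in_image[OF permutes_inv[OF assms]] by (simp add: b_def)
    moreover have "g (r b) = g b"
      using a(2) permutes_inverses(1)[OF assms] by (simp add: b_def)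
    then have "r b = b"
      using permutes_inj[OF assms] by (simp add: inj_eq)
    moreover have "a = g b"
      using permutes_inverses(1)[OF assms] by (simp add: b_def)
    ultimately show "a \<in> g ` {b \<in> S. r b = b}"
      by blast
  qed (use assms in \<open>auto simp: permutes_inverses permutes_in_image\<close>)
  moreover have "inj_on g {b \<in> S. r b = b}"
    using permutes_inj_on[OF assms] inj_on_subset by blast
  ultimately show ?thesis
    by (simp add: card_image)
qed

lemma chi2_conj:
  assumes "g permutes {0..<n}" "r permutes {0..<n}"
  shows "chi2 n (g \<circ> r \<circ> Hilbert_Choice.inv g) = chi2 n r"
proof -
  have perm: "permutation g" "permutation r" "permutation (Hilbert_Choice.inv g)"
    using assms by (auto simp: permutation_permutes intro: permutes_inv)
  have "sign (g \<circ> r \<circ> Hilbert_Choice.inv g) = (sign r :: int)"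
    using perm by (simp add: sign_compose permutation_compose sign_inverse)
  moreover have "card {i. i < n \<and> (g \<circ> r \<circ> Hilbert_Choice.inv g) i = i} = card {i. i < n \<and> r i = i}"
    using card_fixpoints_conj[OF assms(1), of r] by (simp add: atLeast0LessThan)
  ultimately show ?thesis
    by (simp add: chi2_def)
qed

lemma chi2_transpose_last_two:
  assumes "q permutes {0..<n}"
  shows "chi2 (Suc (Suc n)) (transpose n (Suc n) \<circ> q) = - chi2 n q"
proof -
  have q_out: "q n = n" "q (Suc n) = Suc n"
    using permutes_not_in[OF assms] by auto
  have q_in: "i < n \<Longrightarrow> q i < n" for i
    using permutes_in_image[OF assms] by auto
  have "permutation q"
    using assms by (auto simp: permutation_permutes)
  then have "sign (transpose n (Suc n) \<circ> q) = - (sign q :: int)"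
    by (simp add: sign_compose permutation_swap_id sign_swap_id)
  moreover have "{i. i < Suc (Suc n) \<and> (transpose n (Suc n) \<circ> q) i = i} = {i. i < n \<and> q i = i}"
    using q_out q_in by (auto simp: less_Suc_eq transpose_def)
  ultimately show ?thesis
    by (simp add: chi2_def)
qed

lemma bij_betw_transpose_last_two:
  "bij_betw (\<lambda>q. transpose n (Suc n) \<circ> q) {q. q permutes {0..<n}}
     {p. p permutes {0..<Suc (Suc n)} \<and> p n = Suc n \<and> p (Suc n) = n}"
proof (rule bij_betw_byWitness[where f' = "\<lambda>p. transpose n (Suc n) \<circ> p"])
  have "q permutes {0..<Suc (Suc n)}" if "q permutes {0..<n}" for q
    using that by (rule permutes_subset) auto
  moreover have "transpose n (Suc n) permutes {0..<Suc (Suc n)}"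
    by (auto intro: permutes_swap_id)
  ultimately
  show "(\<lambda>q. transpose n (Suc n) \<circ> q) ` {q. q permutes {0..<n}}
      \<subseteq> {p. p permutes {0..<Suc (Suc n)} \<and> p n = Suc n \<and> p (Suc n) = n}"
    by (auto intro: permutes_compose simp: permutes_not_in)
  show "(\<lambda>p. transpose n (Suc n) \<circ> p)
      ` {p. p permutes {0..<Suc (Suc n)} \<and> p n = Suc n \<and> p (Suc n) = n} \<subseteq> {q. q permutes {0..<n}}"
  proof clarify
    fix p assume p: "p permutes {0..<Suc (Suc n)}" "p n = Suc n" "p (Suc n) = n"
    show "transpose n (Suc n) \<circ> p permutes {0..<n}"
    proof (rule permutes_superset)
      show "transpose n (Suc n) \<circ> p permutes {0..<Suc (Suc n)}"
        using p(1) by (intro permutes_compose permutes_swap_id) auto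
      show "(transpose n (Suc n) \<circ> p) x = x" if "x \<in> {0..<Suc (Suc n)} - {0..<n}" for x
        using that p(2,3) by (auto simp: less_Suc_eq)
    qed
  qed
qed (auto simp: fun_eq_iff)

lemma bij_betw_conj_swapping:
  assumes "g permutes S"
  shows "bij_betw (\<lambda>r. g \<circ> r \<circ> Hilbert_Choice.inv g) {r. r permutes S \<and> r a = b \<and> r b = a}
           {p. p permutes S \<and> p (g a) = g b \<and> p (g b) = g a}"
proof (rule bij_betw_byWitness[where f' = "\<lambda>p. Hilbert_Choice.inv g \<circ> p \<circ> g"])
  have g_inv: "Hilbert_Choice.inv g permutes S"
    using assms by (rule permutes_inv)
  show "(\<lambda>r. g \<circ> r \<circ> Hilbert_Choice.inv g) ` {r. r permutes S \<and> r a = b \<and> r b = a}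
      \<subseteq> {p. p permutes S \<and> p (g a) = g b \<and> p (g b) = g a}"
    using assms g_inv by (auto intro: permutes_compose simp: permutes_inverses)
  show "(\<lambda>p. Hilbert_Choice.inv g \<circ> p \<circ> g) ` {p. p permutes S \<and> p (g a) = g b \<and> p (g b) = g a}
      \<subseteq> {r. r permutes S \<and> r a = b \<and> r b = a}"
    using assms g_inv by (auto intro: permutes_compose simp: permutes_inverses)
qed (use assms in \<open>auto simp: fun_eq_iff permutes_inverses\<close>)

lemma d2_term_conj:
  assumes B: "B \<in> carrier_mat n n" and g: "g permutes {0..<n}" and r: "r permutes {0..<n}"
  shows "d2_term B n (g \<circ> r \<circ> Hilbert_Choice.inv g)
       = d2_term (mat n n (\<lambda>(a, b). B $$ (g a, g b))) n r"
proof -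
  have "(\<Prod>i = 0..<n. B $$ (i, (g \<circ> r \<circ> Hilbert_Choice.inv g) i))
      = (\<Prod>i = 0..<n. B $$ (g i, g (r i)))"
    using prod.reindex_bij_betw[OF permutes_imp_bij[OF g],
        of "\<lambda>i. B $$ (i, (g \<circ> r \<circ> Hilbert_Choice.inv g) i)"]
    by (simp add: permutes_inverses[OF g])
  also have "\<dots> = (\<Prod>i = 0..<n. mat n n (\<lambda>(a, b). B $$ (g a, g b)) $$ (i, r i))"
    using permutes_in_image[OF r] by (intro prod.cong) auto
  finally show ?thesis
    by (simp add: d2_term_def chi2_conj[OF g r])
qed

lemma prod_transpose_last_two:
  assumes "q permutes {0..<n}"
  shows "(\<Prod>i = 0..<Suc (Suc n). C $$ (i, transpose n (Suc n) (q i)))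
       = C $$ (n, Suc n) * C $$ (Suc n, n) * (\<Prod>i = 0..<n. C $$ (i, q i))"
proof -
  have q_out: "q n = n" "q (Suc n) = Suc n"
    using permutes_not_in[OF assms] by auto
  have "transpose n (Suc n) (q i) = q i" if "i < n" for i
    using permutes_in_image[OF assms, of i] that by (simp add: transpose_def)
  then have "(\<Prod>i = 0..<n. C $$ (i, transpose n (Suc n) (q i))) = (\<Prod>i = 0..<n. C $$ (i, q i))"
    by simp
  then show ?thesis
    using q_out by (simp add: ac_simps)
qed

lemma sum_d2_term_swapping_last_two:
  "(\<Sum>p | p permutes {0..<Suc (Suc n)} \<and> p n = Suc n \<and> p (Suc n) = n. d2_term C (Suc (Suc n)) p)
     = - (C $$ (n, Suc n) * C $$ (Suc n, n)) * (\<Sum>q | q permutes {0..<n}. d2_term C n q)"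
proof -
  have "(\<Sum>p | p permutes {0..<Suc (Suc n)} \<and> p n = Suc n \<and> p (Suc n) = n. d2_term C (Suc (Suc n)) p)
      = (\<Sum>q | q permutes {0..<n}. d2_term C (Suc (Suc n)) (transpose n (Suc n) \<circ> q))"
    by (rule sum.reindex_bij_betw[OF bij_betw_transpose_last_two, symmetric])
  also have "\<dots> = (\<Sum>q | q permutes {0..<n}. - (C $$ (n, Suc n) * C $$ (Suc n, n)) * d2_term C n q)"
  proof (rule sum.cong)
    fix q assume "q \<in> {q. q permutes {0..<n}}"
    then have q: "q permutes {0..<n}" by simp
    show "d2_term C (Suc (Suc n)) (transpose n (Suc n) \<circ> q)
        = - (C $$ (n, Suc n) * C $$ (Suc n, n)) * d2_term C n q"
      unfolding d2_term_def comp_apply chi2_transpose_last_two[OF q] prod_transpose_last_two[OF q]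
      by (simp add: algebra_simps)
  qed simp
  finally show ?thesis
    by (simp add: sum_distrib_left)
qed

definition skip_two :: "nat \<Rightarrow> nat \<Rightarrow> nat \<Rightarrow> nat" where
  "skip_two j k a = (if a < j then a else if Suc a < k then Suc a else Suc (Suc a))"

definition relabel_last_two :: "nat \<Rightarrow> nat \<Rightarrow> nat \<Rightarrow> nat \<Rightarrow> nat" where
  "relabel_last_two n j k a =
     (if a < n then skip_two j k a else if a = n then j else if a = Suc n then k else a)"

lemma skip_two_strict_mono: "j < k \<Longrightarrow> strict_mono (skip_two j k)"
  by (auto simp: strict_mono_def skip_two_def)

lemma skip_two_neq:
  assumes "j < k"
  shows "skip_two j k a \<noteq> j" "skip_two j k a \<noteq> k"
  using assms by (auto simp: skip_two_def)

lemma relabel_last_two_permutes: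
  assumes "j < k" "k < Suc (Suc n)"
  shows "relabel_last_two n j k permutes {0..<Suc (Suc n)}"
proof (rule bij_imp_permutes)
  have "inj_on (relabel_last_two n j k) {0..<Suc (Suc n)}"
    using assms skip_two_neq[OF assms(1)] skip_two_neq[OF assms(1), THEN not_sym]
      strict_mono_eq[OF skip_two_strict_mono[OF assms(1)]]
    by (auto simp: inj_on_def relabel_last_two_def less_Suc_eq)
  moreover have "relabel_last_two n j k ` {0..<Suc (Suc n)} \<subseteq> {0..<Suc (Suc n)}"
    using assms by (auto simp: relabel_last_two_def skip_two_def)
  ultimately show "bij_betw (relabel_last_two n j k) {0..<Suc (Suc n)} {0..<Suc (Suc n)}"
    by (simp add: bij_betw_def endo_inj_surj)
qed (auto simp: relabel_last_two_def)

lemma del2_index: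
  assumes "B \<in> carrier_mat (Suc (Suc n)) (Suc (Suc n))" "j < k" "k < Suc (Suc n)" "a < n" "b < n"
  shows "del2 B j k $$ (a, b) = B $$ (skip_two j k a, skip_two j k b)"
  using assms by (auto simp: del2_def mat_delete_def skip_two_def)

lemma sum_d2_term_swapping:
  assumes B: "B \<in> carrier_mat n n" and sym: "B $$ (k, j) = B $$ (j, k)" and jk: "j < k" "k < n"
  shows "(\<Sum>p | p permutes {0..<n} \<and> p j = k \<and> p k = j. d2_term B n p)
           = - (B $$ (j, k))\<^sup>2 * d2 (del2 B j k)"
proof -
  obtain n' where n: "n = Suc (Suc n')"
    using jk by (auto dest!: less_imp_Suc_add)
  define g where "g = relabel_last_two n' j k"
  define C where "C = mat n n (\<lambda>(a, b). B $$ (g a, g b))"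
  have g: "g permutes {0..<n}" "g n' = j" "g (Suc n') = k"
    using relabel_last_two_permutes[of j k n'] jk by (simp_all add: g_def n relabel_last_two_def)
  have "bij_betw (\<lambda>r. g \<circ> r \<circ> Hilbert_Choice.inv g)
      {r. r permutes {0..<n} \<and> r n' = Suc n' \<and> r (Suc n') = n'}
      {p. p permutes {0..<n} \<and> p j = k \<and> p k = j}"
    using bij_betw_conj_swapping[OF g(1), of n' "Suc n'"] by (simp add: g)
  then have "(\<Sum>p | p permutes {0..<n} \<and> p j = k \<and> p k = j. d2_term B n p)
      = (\<Sum>r | r permutes {0..<n} \<and> r n' = Suc n' \<and> r (Suc n') = n'.
           d2_term B n (g \<circ> r \<circ> Hilbert_Choice.inv g))"
    by (rule sum.reindex_bij_betw[symmetric])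
  also have "\<dots> = (\<Sum>r | r permutes {0..<n} \<and> r n' = Suc n' \<and> r (Suc n') = n'. d2_term C n r)"
    using B g(1) by (intro sum.cong) (auto simp: C_def d2_term_conj)
  also have "\<dots> = - (C $$ (n', Suc n') * C $$ (Suc n', n')) * (\<Sum>q | q permutes {0..<n'}. d2_term C n' q)"
    unfolding n by (rule sum_d2_term_swapping_last_two)
  also have "C $$ (n', Suc n') * C $$ (Suc n', n') = (B $$ (j, k))\<^sup>2"
    using sym g by (simp add: C_def n power2_eq_square)
  also have "(\<Sum>q | q permutes {0..<n'}. d2_term C n' q) = d2 (del2 B j k)"
  proof -
    have "del2 B j k \<in> carrier_mat n' n'"
      using B by (simp add: del2_def mat_delete_def n)
    moreover have "del2 B j k $$ (a, b) = C $$ (a, b)" if "a < n'" "b < n'" for a b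
      using that B jk by (simp add: del2_index C_def g_def relabel_last_two_def n)
    ultimately show ?thesis
      by (auto simp: d2_eq_sum_d2_term d2_term_def permutes_in_image intro!: sum.cong prod.cong)
  qed
  finally show ?thesis
    by simp
qed

definition perm_edges :: "'a::linorder set \<Rightarrow> ('a \<Rightarrow> 'a) \<Rightarrow> ('a \<times> 'a) set" where
  "perm_edges A p = {(i, j). i \<in> A \<and> j \<in> A \<and> i \<le> j \<and> (p i = j \<or> p j = i)}"

definition two_cycles :: "'a::linorder set \<Rightarrow> ('a \<Rightarrow> 'a) \<Rightarrow> ('a \<times> 'a) set" where
  "two_cycles A p = {(i, j). i \<in> A \<and> j \<in> A \<and> i < j \<and> p i = j \<and> p j = i}"

lemma card_perm_edges_add_card_two_cycles:
  assumes p: "p permutes A" and "finite A"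
  shows "card (perm_edges A p) + card (two_cycles A p) = card A"
proof -
  \<comment> \<open>Every edge {x, p x} has exactly one endpoint in S; the edge of a 2-cycle has its other,
    larger endpoint in R.\<close>
  define S where "S = {x \<in> A. x \<le> p x \<or> p (p x) \<noteq> x}"
  define R where "R = {x \<in> A. p x < x \<and> p (p x) = x}"
  have pA: "x \<in> A \<Longrightarrow> p x \<in> A" for x
    using permutes_in_image[OF p] by simp
  have "bij_betw (\<lambda>x. (min x (p x), max x (p x))) S (perm_edges A p)"
  proof (rule bij_betw_imageI)
    show "inj_on (\<lambda>x. (min x (p x), max x (p x))) S"
    proof (rule inj_onI)
      fix x y assume "x \<in> S" "y \<in> S" "(min x (p x), max x (p x)) = (min y (p y), max y (p y))"
      then show "x = y"
        unfolding S_def by (cases "x \<le> p x"; cases "y \<le> p y") (auto simp: min_def max_def)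
    qed
    show "(\<lambda>x. (min x (p x), max x (p x))) ` S = perm_edges A p"
    proof (intro equalityI subsetI)
      fix e assume "e \<in> (\<lambda>x. (min x (p x), max x (p x))) ` S"
      then show "e \<in> perm_edges A p"
        using pA by (auto simp: S_def perm_edges_def min_def max_def split: if_splits)
    next
      fix e assume "e \<in> perm_edges A p"
      then obtain i j where e: "e = (i, j)" "i \<in> A" "j \<in> A" "i \<le> j" "p i = j \<or> p j = i"
        by (auto simp: perm_edges_def)
      show "e \<in> (\<lambda>x. (min x (p x), max x (p x))) ` S"
      proof (cases "p i = j")
        case True
        with e show ?thesis
          by (intro image_eqI[of _ _ i]) (auto simp: S_def)
      next
        case False
        with e show ?thesis
          by (intro image_eqI[of _ _ j]) (auto simp: S_def)
      qed
    qed
  qed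
  moreover have "bij_betw (\<lambda>x. (p x, x)) R (two_cycles A p)"
    by (rule bij_betw_imageI) (auto simp: inj_on_def R_def two_cycles_def pA image_iff)
  moreover have "card S + card R = card A"
  proof -
    have "S \<union> R = A" "S \<inter> R = {}"
      by (auto simp: S_def R_def)
    then show ?thesis
      using card_Un_disjoint[of S R] \<open>finite A\<close> by (metis finite_Un)
  qed
  ultimately show ?thesis
    by (simp add: bij_betw_same_card)
qed

lemma card_upper_nonzero:
  fixes B :: "'a::zero mat"
  shows "card {(i, j). i \<le> j \<and> j < n \<and> B $$ (i, j) \<noteq> 0}
       = card {(i, j). i < j \<and> j < n \<and> B $$ (i, j) \<noteq> 0} + (n - card {i. i < n \<and> B $$ (i, i) = 0})"
proof -
  define Z where "Z = {i. i < n \<and> B $$ (i, i) = 0}"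
  define D where "D = (\<lambda>i. (i, i)) ` ({0..<n} - Z)"
  define U where "U = {(i, j). i < j \<and> j < n \<and> B $$ (i, j) \<noteq> 0}"
  have "finite U"
    by (rule finite_subset[of _ "{0..<n} \<times> {0..<n}"]) (auto simp: U_def)
  have "{(i, j). i \<le> j \<and> j < n \<and> B $$ (i, j) \<noteq> 0} = D \<union> U"
    by (auto simp: D_def U_def Z_def order.order_iff_strict)
  moreover have "card D = n - card Z"
    by (auto simp: D_def Z_def card_image inj_on_def card_Diff_subset[of _ "{0..<n}"] subset_eq)
  moreover have "card (D \<union> U) = card D + card U"
    using \<open>finite U\<close> by (intro card_Un_disjoint) (auto simp: D_def U_def)
  ultimately show ?thesis
    by (simp add: U_def Z_def)
qed

lemma card_offdiag_nonzero:
  fixes B :: "'a::zero mat"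
  assumes sym: "\<And>s t. s < n \<Longrightarrow> t < n \<Longrightarrow> B $$ (s, t) = B $$ (t, s)"
  shows "card {(s, t). s < n \<and> t < n \<and> s \<noteq> t \<and> B $$ (s, t) \<noteq> 0}
       = 2 * card {(i, j). i < j \<and> j < n \<and> B $$ (i, j) \<noteq> 0}"
proof -
  define U where "U = {(i, j). i < j \<and> j < n \<and> B $$ (i, j) \<noteq> 0}"
  have "finite U"
    by (rule finite_subset[of _ "{0..<n} \<times> {0..<n}"]) (auto simp: U_def)
  have "{(s, t). s < n \<and> t < n \<and> s \<noteq> t \<and> B $$ (s, t) \<noteq> 0} = U \<union> prod.swap ` U"
    using sym by (auto simp: U_def image_iff neq_iff)
  moreover have "card (U \<union> prod.swap ` U) = card U + card (prod.swap ` U)"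
    using \<open>finite U\<close> by (intro card_Un_disjoint) (auto simp: U_def)
  moreover have "card (prod.swap ` U) = card U"
    by (rule card_image) simp
  ultimately show ?thesis
    by (simp add: U_def)
qed

lemma d2_zero_pair:
  assumes B: "B \<in> carrier_mat n n" and ij: "i < n" "j < n"
  shows "d2 (zero_pair B i j)
       = (\<Sum>p | p permutes {0..<n}. if p i = j \<or> p j = i then 0 else d2_term B n p)"
proof -
  have "d2_term (zero_pair B i j) n p = (if p i = j \<or> p j = i then 0 else d2_term B n p)"
    if p: "p permutes {0..<n}" for p
  proof (cases "p i = j \<or> p j = i")
    case True
    then have "\<exists>s \<in> {0..<n}. zero_pair B i j $$ (s, p s) = 0"
    proof
      assume "p i = j"
      then show ?thesis
        using B ij by (intro bexI[of _ i]) (auto simp: zero_pair_def)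
    next
      assume "p j = i"
      then show ?thesis
        using B ij by (intro bexI[of _ j]) (auto simp: zero_pair_def)
    qed
    then show ?thesis
      using True by (simp add: d2_term_def prod_zero)
  next
    case False
    have "zero_pair B i j $$ (s, p s) = B $$ (s, p s)" if "s < n" for s
      using False B that permutes_in_image[OF p, of s] by (auto simp: zero_pair_def)
    then have "(\<Prod>s = 0..<n. zero_pair B i j $$ (s, p s)) = (\<Prod>s = 0..<n. B $$ (s, p s))"
      by (intro prod.cong) auto
    then show ?thesis
      using False by (simp add: d2_term_def)
  qed
  moreover have "zero_pair B i j \<in> carrier_mat n n"
    using B by (simp add: zero_pair_def)
  ultimately show ?thesis
    by (simp add: d2_eq_sum_d2_term)
qed

lemma card_upper_nonzero_avoiding_perm:
  fixes B :: "'a::zero mat"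
  assumes sym: "\<And>s t. s < n \<Longrightarrow> t < n \<Longrightarrow> B $$ (s, t) = B $$ (t, s)"
    and p: "p permutes {0..<n}" and nz: "\<And>s. s < n \<Longrightarrow> B $$ (s, p s) \<noteq> 0"
  shows "card {(i, j). i \<le> j \<and> j < n \<and> B $$ (i, j) \<noteq> 0 \<and> \<not> (p i = j \<or> p j = i)} + n
       = card {(i, j). i \<le> j \<and> j < n \<and> B $$ (i, j) \<noteq> 0} + card (two_cycles {0..<n} p)"
proof -
  define I where "I = {(i, j). i \<le> j \<and> j < n \<and> B $$ (i, j) \<noteq> 0}"
  define E where "E = perm_edges {0..<n} p"
  have "finite I"
    by (rule finite_subset[of _ "{0..<n} \<times> {0..<n}"]) (auto simp: I_def)
  have "B $$ (i, j) \<noteq> 0" if "i < n" "j < n" "p i = j \<or> p j = i" for i j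
    using that nz[of i] nz[of j] sym[of i j] by auto
  then have "E \<subseteq> I"
    by (auto simp: E_def perm_edges_def I_def)
  then have "card (I - E) = card I - card E" "card E \<le> card I"
    using \<open>finite I\<close> by (auto intro: card_Diff_subset finite_subset card_mono)
  moreover have "card E + card (two_cycles {0..<n} p) = n"
    using card_perm_edges_add_card_two_cycles[OF p] by (simp add: E_def)
  moreover have "{(i, j). i \<le> j \<and> j < n \<and> B $$ (i, j) \<noteq> 0 \<and> \<not> (p i = j \<or> p j = i)} = I - E"
    by (auto simp: I_def E_def perm_edges_def)
  ultimately show ?thesis
    unfolding I_def by simp
qed

lemma sum_d2_zero_pair:
  assumes B: "B \<in> carrier_mat n n"
    and sym: "\<And>s t. s < n \<Longrightarrow> t < n \<Longrightarrow> B $$ (s, t) = B $$ (t, s)"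
  shows "(\<Sum>(i, j) \<in> {(i, j). i \<le> j \<and> j < n \<and> B $$ (i, j) \<noteq> 0}. d2 (zero_pair B i j))
       = (\<Sum>p | p permutes {0..<n}.
            (of_nat (card {(i, j). i \<le> j \<and> j < n \<and> B $$ (i, j) \<noteq> 0}) - of_nat n
              + of_nat (card (two_cycles {0..<n} p))) * d2_term B n p)"
proof -
  define I where "I = {(i, j). i \<le> j \<and> j < n \<and> B $$ (i, j) \<noteq> 0}"
  define P where "P = {p. p permutes {0..<n}}"
  define avoids where "avoids p = (\<lambda>(i, j). \<not> (p i = j \<or> p j = i))" for p :: "nat \<Rightarrow> nat"
  have "finite I"
    by (rule finite_subset[of _ "{0..<n} \<times> {0..<n}"]) (auto simp: I_def)
  have "(\<Sum>(i, j) \<in> I. d2 (zero_pair B i j))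
      = (\<Sum>x \<in> I. \<Sum>p \<in> P. if avoids p x then d2_term B n p else 0)"
    by (intro sum.cong) (auto simp: I_def P_def avoids_def d2_zero_pair[OF B] intro!: sum.cong)
  also have "\<dots> = (\<Sum>p \<in> P. \<Sum>x \<in> I. if avoids p x then d2_term B n p else 0)"
    by (rule sum.swap)
  also have "\<dots> = (\<Sum>p \<in> P. of_nat (card {x \<in> I. avoids p x}) * d2_term B n p)"
    using \<open>finite I\<close> by (simp add: sum.inter_filter[symmetric])
  also have "\<dots> = (\<Sum>p \<in> P. (of_nat (card I) - of_nat n + of_nat (card (two_cycles {0..<n} p))) * d2_term B n p)"
  proof (rule sum.cong[OF refl])
    fix p assume "p \<in> P"
    then have p: "p permutes {0..<n}"
      by (simp add: P_def)
    show "of_nat (card {x \<in> I. avoids p x}) * d2_term B n p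
        = (of_nat (card I) - of_nat n + of_nat (card (two_cycles {0..<n} p))) * d2_term B n p"
    proof (cases "d2_term B n p = 0")
      case False
      then have nz: "B $$ (s, p s) \<noteq> 0" if "s < n" for s
        using that by (auto simp: d2_term_def)
      have "{x \<in> I. avoids p x}
          = {(i, j). i \<le> j \<and> j < n \<and> B $$ (i, j) \<noteq> 0 \<and> \<not> (p i = j \<or> p j = i)}"
        by (auto simp: I_def avoids_def)
      then have "card {x \<in> I. avoids p x} + n = card I + card (two_cycles {0..<n} p)"
        using card_upper_nonzero_avoiding_perm[OF sym p nz] by (simp add: I_def)
      then have "(of_nat (card {x \<in> I. avoids p x}) :: complex) + of_nat n
          = of_nat (card I) + of_nat (card (two_cycles {0..<n} p))"
        by (metis of_nat_add)
      then show ?thesis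
        by (simp add: diff_add_eq eq_diff_eq)
    qed simp
  qed
  finally show ?thesis
    by (simp add: I_def P_def)
qed

lemma sum_two_cycles_d2_term:
  assumes B: "B \<in> carrier_mat n n"
    and sym: "\<And>s t. s < n \<Longrightarrow> t < n \<Longrightarrow> B $$ (s, t) = B $$ (t, s)"
  shows "(\<Sum>p | p permutes {0..<n}. of_nat (card (two_cycles {0..<n} p)) * d2_term B n p)
       = - (\<Sum>(i, j) \<in> {(i, j). i < j \<and> j < n \<and> B $$ (i, j) \<noteq> 0}. (B $$ (i, j))\<^sup>2 * d2 (del2 B i j))"
proof -
  define P where "P = {p. p permutes {0..<n}}"
  define D where "D = {(j, k). j < k \<and> k < n}"
  define swaps where "swaps p = (\<lambda>(j, k). p j = k \<and> p k = j)" for p :: "nat \<Rightarrow> nat"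
  have "finite P" "finite D"
    by (auto simp: P_def D_def finite_permutations intro: finite_subset[of _ "{0..<n} \<times> {0..<n}"])
  have "(\<Sum>p \<in> P. of_nat (card (two_cycles {0..<n} p)) * d2_term B n p)
      = (\<Sum>p \<in> P. \<Sum>x \<in> D. if swaps p x then d2_term B n p else 0)"
  proof (rule sum.cong[OF refl])
    fix p
    have "two_cycles {0..<n} p = {x \<in> D. swaps p x}"
      by (auto simp: two_cycles_def D_def swaps_def)
    then show "of_nat (card (two_cycles {0..<n} p)) * d2_term B n p
        = (\<Sum>x \<in> D. if swaps p x then d2_term B n p else 0)"
      using \<open>finite D\<close> by (simp add: sum.inter_filter[symmetric])
  qed
  also have "\<dots> = (\<Sum>x \<in> D. \<Sum>p \<in> P. if swaps p x then d2_term B n p else 0)"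
    by (rule sum.swap)
  also have "\<dots> = (\<Sum>(j, k) \<in> D. \<Sum>p | p permutes {0..<n} \<and> p j = k \<and> p k = j. d2_term B n p)"
    using \<open>finite P\<close> by (intro sum.cong) (auto simp: sum.inter_filter[symmetric] P_def swaps_def)
  also have "\<dots> = (\<Sum>(j, k) \<in> D. - (B $$ (j, k))\<^sup>2 * d2 (del2 B j k))"
    using B sym by (intro sum.cong) (auto simp: D_def sum_d2_term_swapping)
  also have "\<dots> = (\<Sum>(j, k) \<in> {(i, j). i < j \<and> j < n \<and> B $$ (i, j) \<noteq> 0}.
      - (B $$ (j, k))\<^sup>2 * d2 (del2 B j k))"
    using \<open>finite D\<close> by (intro sum.mono_neutral_right) (auto simp: D_def)
  finally show ?thesis
    by (simp add: P_def sum_negf case_prod_unfold)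
qed

theorem lemma2p4:
  fixes B :: "complex mat" and n m c :: nat
  assumes "B \<in> carrier_mat n n"
    and "\<And>s t. s < n \<Longrightarrow> t < n \<Longrightarrow> B $$ (s,t) = B $$ (t,s)"
    and "2 * m = card {(s,t). s < n \<and> t < n \<and> s \<noteq> t \<and> B $$ (s,t) \<noteq> 0}"
    and "c = card {i. i < n \<and> B $$ (i,i) = 0}"
  shows "(of_nat m - of_nat c) * d2 B =
     (\<Sum>(i,j) \<in> {(i,j). i \<le> j \<and> j < n \<and> B $$ (i,j) \<noteq> 0}. d2 (zero_pair B i j))
   + (\<Sum>(i,j) \<in> {(i,j). i < j \<and> j < n \<and> B $$ (i,j) \<noteq> 0}. (B $$ (i,j))^2 * d2 (del2 B i j))"
proof -
  have "c \<le> card {0..<n}"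
    unfolding assms(4) by (rule card_mono) auto
  moreover have "card {(i, j). i \<le> j \<and> j < n \<and> B $$ (i, j) \<noteq> 0} = m + (n - c)"
    using card_upper_nonzero[of n B] card_offdiag_nonzero[OF assms(2)] assms(3,4) by simp
  ultimately have "of_nat (card {(i, j). i \<le> j \<and> j < n \<and> B $$ (i, j) \<noteq> 0}) - of_nat n
      = (of_nat m - of_nat c :: complex)"
    by (simp add: of_nat_diff)
  then have "(\<Sum>(i, j) \<in> {(i, j). i \<le> j \<and> j < n \<and> B $$ (i, j) \<noteq> 0}. d2 (zero_pair B i j))
      = (of_nat m - of_nat c) * d2 B
        + (\<Sum>p | p permutes {0..<n}. of_nat (card (two_cycles {0..<n} p)) * d2_term B n p)"
    using assms(1) by (simp add: sum_d2_zero_pair[OF assms(1,2)] d2_eq_sum_d2_term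
        distrib_right sum.distrib sum_distrib_left)
  then show ?thesis
    by (simp add: sum_two_cycles_d2_term[OF assms(1,2)])
qed

end
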